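(* Let $0\le \rho_m\le\rho_M\le\rho_{\max}$ and let $g,v,w_\eta$ satisfy the standing assumptions (A) below. Let $h>0$, $N\in\mathbb{N}$ with $Nh=\eta$, and let a quadrature rule with nodes $y_1,\dots,y_R\in[0,1]$, $y_R=1$, and weights $\gamma_1,\dots,\gamma_R>0$, $\sum_{\nu=1}^R\gamma_\nu=1$, be given, such that $$h\sum_{k=0}^{N-1}\sum_{\nu=1}^{R}\gamma_\nu\, w_\eta^{\nu,k}=1,\qquad w_\eta^{\nu,k}:=w_\eta\big((k+y_\nu)h\big).$$ Suppose that at time $t^n$ we are given cell averages $\bar\rho_j^n\in[\rho_m,\rho_M]$ ($j\in\mathbb{Z}$) and, for every $l\in\mathbb{Z}$, a polynomial $P_l$ on $I_l=[x_{l-1/2},x_{l+1/2}]$ (with $x_{l+1/2}-x_{l-1/2}=h$) such that $\frac1h\int_{I_l}P_l(x)\,dx=\bar\rho_l^n$, the quadrature rule is exact for $P_l$, i.e. $\frac1h\int_{I_l}P_l\,dx=\sum_{\nu}\gamma_\nu P_l(x_{l-1/2}+y_\nu h)$, and all reconstructed values $\rho_l^\nu:=P_l(x_{l-1/2}+y_\nu h)$ lie in $[\rho_m,\rho_M]$. Define $\rho^-_{j+1/2}:=P_j(x_{j+1/2})\,(=\rho_j^R)$, $$V_{j+1/2}:=v\Big(h\sum_{k=0}^{N-1}\sum_{\nu=1}^R\gamma_\nu w_\eta^{\nu,k}\rho^\nu_{j+k+1}\Big),$$ and, for $\tau>0$, the forward Euler update $$\bar\rho_j^{n+1}=\bar\rho_j^n-\frac{\tau}{h}\Big(V_{j+1/2}\,g(\rho^-_{j+1/2})-V_{j-1/2}\,g(\rho^-_{j-1/2})\Big),\quad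 j\in\mathbb{Z}.$$ If $$\tau\le\frac{\gamma_R h}{\gamma_R h\, w_\eta(0)\,\|v'\|\,\|g\|+\|v\|\,\|g'\|},$$ where $\|\cdot\|$ denotes the sup norm on $[0,\rho_{\max}]$, then $\rho_m\le\bar\rho_j^{n+1}\le\rho_M$ for all $j\in\mathbb{Z}$.
   Context: Standing assumptions (A): $\rho_{\max}>0$, $\eta>0$; $g\in C^1([0,\rho_{\max}];\mathbb{R}_{\ge0})$ with $g'\ge0$; $v\in C^1([0,\rho_{\max}];\mathbb{R}_{\ge0})$ with $v'\le0$; $w_\eta\in C^1([0,\eta];\mathbb{R}_{\ge0})$ with $w_\eta'\le0$ and $\int_0^\eta w_\eta(x)\,dx=1$. These arise from the non-local conservation law $\rho_t+(g(\rho)v(\rho*w_\eta))_x=0$ with $(\rho*w_\eta)(t,x)=\int_x^{x+\eta}w_\eta(y-x)\rho(t,y)\,dy$, discretized on a uniform grid $x_j=x_0+jh$, $x_{j\pm1/2}=x_j\pm h/2$. *)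

theory Defs
  imports "HOL-Analysis.Analysis" "HOL-Computational_Algebra.Polynomial"
begin

definition sup_norm_on :: "real set \<Rightarrow> (real \<Rightarrow> real) \<Rightarrow> real" where
  "sup_norm_on S f = (SUP x\<in>S. \<bar>f x\<bar>)"

text \<open>Reconstructed value rho_l^nu = P_l(x_{l-1/2} + y_nu h), with x_j = x0 + j h.\<close>
definition recon :: "(int \<Rightarrow> real poly) \<Rightarrow> real \<Rightarrow> real \<Rightarrow> (nat \<Rightarrow> real) \<Rightarrow> int \<Rightarrow> nat \<Rightarrow> real" where
  "recon P x0 h y l \<nu> = poly (P l) (x0 + real_of_int l * h - h / 2 + y \<nu> * h)"

definition Vface :: "(real \<Rightarrow> real) \<Rightarrow> (real \<Rightarrow> real) \<Rightarrow> (int \<Rightarrow> real poly) \<Rightarrow> real \<Rightarrow> real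
    \<Rightarrow> nat \<Rightarrow> nat \<Rightarrow> (nat \<Rightarrow> real) \<Rightarrow> (nat \<Rightarrow> real) \<Rightarrow> int \<Rightarrow> real" where
  "Vface v w P x0 h N R \<gamma> y j =
     v (h * (\<Sum>k<N. \<Sum>\<nu>=1..R. \<gamma> \<nu> * w ((real k + y \<nu>) * h) * recon P x0 h y (j + int k + 1) \<nu>))"

end

theory Submission
  imports Defs
begin

(* With D = rho_M - rhobar_j, the new average is rho_M - D + tau/h times the decrease of the
   numerical flux across cell j.  That decrease splits into a change of g, at most
   |v| |g'| (rho_M - rho_j^R) because g is nondecreasing, and a change of the velocity, at most
   |g| |v'| times the increase of the nonlocal average because v is nonincreasing.  Summation by
   parts against the nonincreasing kernel bounds that increase by h w(0) D, quadrature exactness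
   gives D >= gamma_R (rho_M - rho_j^R), and the CFL condition is exactly what keeps the two
   contributions below D.  The lower bound is symmetric. *)

lemma mono_on_Icc_if_deriv_nonneg:
  fixes f f' :: "real \<Rightarrow> real"
  assumes deriv: "\<And>x. x \<in> {a..b} \<Longrightarrow> (f has_real_derivative f' x) (at x within {a..b})"
    and nonneg: "\<And>x. x \<in> {a..b} \<Longrightarrow> 0 \<le> f' x"
  shows "mono_on {a..b} f"
proof (rule mono_onI)
  fix s t assume st: "s \<in> {a..b}" "t \<in> {a..b}" "s \<le> t"
  show "f s \<le> f t"
  proof (rule DERIV_nonneg_imp_increasing_open[OF \<open>s \<le> t\<close>])
    fix x assume "s < x" "x < t"
    with st have x: "a < x" "x < b" by auto
    then have "at x within {a..b} = at x" by (rule at_within_Icc_at)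
    then show "\<exists>y. (f has_real_derivative y) (at x) \<and> 0 \<le> y"
      using deriv[of x] nonneg[of x] x by auto
  next
    have "continuous_on {a..b} f" by (rule DERIV_continuous_on) (rule deriv)
    then show "continuous_on {s..t} f" by (rule continuous_on_subset) (use st in auto)
  qed
qed

lemma antimono_on_Icc_if_deriv_nonpos:
  fixes f f' :: "real \<Rightarrow> real"
  assumes "\<And>x. x \<in> {a..b} \<Longrightarrow> (f has_real_derivative f' x) (at x within {a..b})"
    and "\<And>x. x \<in> {a..b} \<Longrightarrow> f' x \<le> 0"
  shows "antimono_on {a..b} f"
proof -
  have "mono_on {a..b} (\<lambda>x. - f x)"
    by (rule mono_on_Icc_if_deriv_nonneg[where f' = "\<lambda>x. - f' x"])
      (use assms in \<open>auto intro: DERIV_minus\<close>)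
  then show ?thesis by (auto simp: monotone_on_def)
qed

lemma abs_le_sup_norm_on:
  fixes f :: "real \<Rightarrow> real"
  assumes "compact S" "continuous_on S f" "x \<in> S"
  shows "\<bar>f x\<bar> \<le> sup_norm_on S f"
proof -
  have "bounded ((\<lambda>x. \<bar>f x\<bar>) ` S)"
    by (intro compact_imp_bounded compact_continuous_image continuous_intros assms)
  then show ?thesis
    unfolding sup_norm_on_def by (intro cSUP_upper assms bounded_imp_bdd_above)
qed

lemma lipschitz_on_Icc_sup_norm_deriv:
  fixes f f' :: "real \<Rightarrow> real"
  assumes deriv: "\<And>x. x \<in> {a..b} \<Longrightarrow> (f has_real_derivative f' x) (at x within {a..b})"
    and cont: "continuous_on {a..b} f'" and "a \<le> b"
  shows "(sup_norm_on {a..b} f')-lipschitz_on {a..b} f"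
proof (rule lipschitz_onI)
  have bound: "\<And>x. x \<in> {a..b} \<Longrightarrow> \<bar>f' x\<bar> \<le> sup_norm_on {a..b} f'"
    by (rule abs_le_sup_norm_on[OF compact_Icc cont])
  then show "0 \<le> sup_norm_on {a..b} f'"
    using \<open>a \<le> b\<close> by (meson abs_ge_zero atLeastAtMost_iff order.trans order_refl)
  fix s t assume "s \<in> {a..b}" "t \<in> {a..b}"
  then show "dist (f s) (f t) \<le> sup_norm_on {a..b} f' * dist s t"
    using field_differentiable_bound[OF convex_real_interval(5) deriv] bound
    by (simp add: dist_real_def)
qed

lemma mono_on_lipschitz_diff_le:
  fixes f :: "real \<Rightarrow> real"
  assumes mono: "mono_on S f" and lip: "L-lipschitz_on S f"
    and "s \<in> S" "t \<in> S" "s - t \<le> \<delta>" "0 \<le> \<delta>"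
  shows "f s - f t \<le> L * \<delta>"
proof (cases "t \<le> s")
  case True
  then have "f s - f t \<le> L * (s - t)"
    using lipschitz_onD[OF lip \<open>s \<in> S\<close> \<open>t \<in> S\<close>] by (simp add: dist_real_def)
  also have "\<dots> \<le> L * \<delta>"
    using assms lipschitz_on_nonneg[OF lip] by (intro mult_left_mono)
  finally show ?thesis .
next
  case False
  then have "f s \<le> f t" using mono assms(3,4) by (simp add: mono_onD)
  moreover have "0 \<le> L * \<delta>" using lipschitz_on_nonneg[OF lip] \<open>0 \<le> \<delta>\<close> by simp
  ultimately show ?thesis by linarith
qed

lemma antimono_on_lipschitz_diff_le:
  fixes f :: "real \<Rightarrow> real"
  assumes "antimono_on S f" "L-lipschitz_on S f"
    and "s \<in> S" "t \<in> S" "t - s \<le> \<delta>" "0 \<le> \<delta>"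
  shows "f s - f t \<le> L * \<delta>"
  using mono_on_lipschitz_diff_le[of S "\<lambda>x. - f x" L t s \<delta>] assms
  by (simp add: monotone_on_def)

lemma sum_nonincreasing_weights_forward_diff_le:
  fixes W \<rho> :: "nat \<Rightarrow> real"
  assumes "0 < n"
    and "\<And>k. k < n \<Longrightarrow> 0 \<le> W k" and "\<And>k. Suc k < n \<Longrightarrow> W (Suc k) \<le> W k"
    and "\<And>k. k \<le> n \<Longrightarrow> \<rho> k \<le> M"
  shows "(\<Sum>k<n. W k * (\<rho> (Suc k) - \<rho> k)) \<le> W 0 * (M - \<rho> 0)"
  using assms
proof (induction n arbitrary: W \<rho>)
  case 0
  then show ?case by simp
next
  case (Suc n)
  show ?case
  proof (cases "n = 0")
    case True
    then show ?thesis using Suc.prems(2)[of 0] Suc.prems(4)[of 1] by (simp add: mult_left_mono)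
  next
    case False
    have shift: "(\<Sum>k<Suc n. W k * (\<rho> (Suc k) - \<rho> k))
        = W 0 * (\<rho> 1 - \<rho> 0) + (\<Sum>k<n. W (Suc k) * (\<rho> (Suc (Suc k)) - \<rho> (Suc k)))"
      by (subst sum.lessThan_Suc_shift) simp
    have "(\<Sum>k<n. W (Suc k) * (\<rho> (Suc (Suc k)) - \<rho> (Suc k))) \<le> W 1 * (M - \<rho> 1)"
      using Suc.IH[of "\<lambda>k. W (Suc k)" "\<lambda>k. \<rho> (Suc k)"] Suc.prems False by auto
    also have "\<dots> \<le> W 0 * (M - \<rho> 1)"
      using Suc.prems(3)[of 0] Suc.prems(4)[of 1] False by (intro mult_right_mono) auto
    finally have "(\<Sum>k<n. W (Suc k) * (\<rho> (Suc (Suc k)) - \<rho> (Suc k))) \<le> W 0 * (M - \<rho> 1)" .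
    moreover have "W 0 * (\<rho> 1 - \<rho> 0) + W 0 * (M - \<rho> 1) = W 0 * (M - \<rho> 0)"
      by (simp add: algebra_simps)
    ultimately show ?thesis unfolding shift by linarith
  qed
qed

lemma product_difference_le:
  fixes x y u z X Z a b :: real
  assumes "0 \<le> x" "x \<le> X" "0 \<le> z" "z \<le> Z" "u - z \<le> a" "x - y \<le> b" "0 \<le> a" "0 \<le> b"
  shows "x * u - y * z \<le> X * a + Z * b"
proof -
  have "x * (u - z) \<le> x * a" using assms by (intro mult_left_mono)
  also have "\<dots> \<le> X * a" using assms by (intro mult_right_mono)
  finally have "x * (u - z) \<le> X * a" .
  moreover have "z * (x - y) \<le> z * b" using assms by (intro mult_left_mono)
  moreover have "\<dots> \<le> Z * b" using assms by (intro mult_right_mono)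
  ultimately show ?thesis by (simp add: algebra_simps)
qed

lemma cfl_increment_le:
  fixes \<gamma> h \<tau> L c d D F :: real
  assumes "0 < \<gamma>" "0 < h" "0 \<le> \<tau>" "0 \<le> L" "0 \<le> d" "\<gamma> * d \<le> D"
    and cfl: "\<tau> * (\<gamma> * h * c + L) \<le> \<gamma> * h"
    and flux: "F \<le> L * d + h * c * D"
  shows "\<tau> / h * F \<le> D"
proof -
  define c\<^sub>1 c\<^sub>2 where "c\<^sub>1 = \<tau> * L / h" and "c\<^sub>2 = \<tau> * c"
  have "(c\<^sub>2 * \<gamma> + c\<^sub>1) * h \<le> \<gamma> * h"
    using cfl \<open>0 < h\<close> by (simp add: c\<^sub>1_def c\<^sub>2_def algebra_simps)
  then have cfl': "c\<^sub>2 * \<gamma> + c\<^sub>1 \<le> \<gamma>" using \<open>0 < h\<close> by simp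
  have "0 \<le> c\<^sub>1" using assms by (simp add: c\<^sub>1_def)
  with cfl' have "c\<^sub>2 * \<gamma> \<le> 1 * \<gamma>" by simp
  then have "c\<^sub>2 \<le> 1" using \<open>0 < \<gamma>\<close> by (rule mult_right_le_imp_le)
  have "\<tau> / h * F \<le> \<tau> / h * (L * d + h * c * D)"
    using flux assms by (intro mult_left_mono) auto
  also have "\<dots> = c\<^sub>1 * d + c\<^sub>2 * D"
    using \<open>0 < h\<close> by (simp add: c\<^sub>1_def c\<^sub>2_def field_simps)
  also have "c\<^sub>1 * d \<le> (1 - c\<^sub>2) * (\<gamma> * d)"
    using mult_right_mono[OF cfl' \<open>0 \<le> d\<close>] by (simp add: algebra_simps)
  also have "(1 - c\<^sub>2) * (\<gamma> * d) \<le> (1 - c\<^sub>2) * D"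
    using \<open>c\<^sub>2 \<le> 1\<close> \<open>\<gamma> * d \<le> D\<close> by (intro mult_left_mono) auto
  finally show ?thesis by (simp add: algebra_simps)
qed

locale nonlocal_quadrature =
  fixes w :: "real \<Rightarrow> real" and h :: real and N R :: nat and \<gamma> y :: "nat \<Rightarrow> real"
  assumes h_pos: "0 < h"
    and w_nonneg: "\<And>x. x \<in> {0..real N * h} \<Longrightarrow> 0 \<le> w x"
    and w_antimono: "antimono_on {0..real N * h} w"
    and \<gamma>_pos: "\<And>\<nu>. \<nu> \<in> {1..R} \<Longrightarrow> 0 < \<gamma> \<nu>"
    and y_range: "\<And>\<nu>. \<nu> \<in> {1..R} \<Longrightarrow> y \<nu> \<in> {0..1}"
    and weights_sum: "h * (\<Sum>k<N. \<Sum>\<nu>=1..R. \<gamma> \<nu> * w ((real k + y \<nu>) * h)) = 1"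
begin

definition conv_quadrature :: "(int \<Rightarrow> nat \<Rightarrow> real) \<Rightarrow> int \<Rightarrow> real" where
  "conv_quadrature r j = h * (\<Sum>k<N. \<Sum>\<nu>=1..R. \<gamma> \<nu> * w ((real k + y \<nu>) * h) * r (j + int k + 1) \<nu>)"

lemma Vface_eq_conv_quadrature:
  "Vface v w P x0 h N R \<gamma> y j = v (conv_quadrature (recon P x0 h y) j)"
  by (simp add: Vface_def conv_quadrature_def)

lemma N_pos: "0 < N"
  using weights_sum by (cases N) auto

lemma R_pos: "0 < R"
  using weights_sum by (cases R) auto

lemma node_in_support: "k < N \<Longrightarrow> \<nu> \<in> {1..R} \<Longrightarrow> (real k + y \<nu>) * h \<in> {0..real N * h}"
proof -
  assume "k < N" "\<nu> \<in> {1..R}"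
  then have "0 \<le> real k + y \<nu>" "real k + y \<nu> \<le> real N"
    using y_range[of \<nu>] by auto
  then show ?thesis using h_pos by (auto intro: mult_right_mono)
qed

lemma w_le_w0:
  assumes "\<nu> \<in> {1..R}"
  shows "w (y \<nu> * h) \<le> w 0"
proof -
  have "y \<nu> * h \<in> {0..real N * h}" using node_in_support[OF N_pos assms] by simp
  then show ?thesis using monotone_onD[OF w_antimono, of 0 "y \<nu> * h"] by auto
qed

lemma quadrature_weight_nonneg: "k < N \<Longrightarrow> \<nu> \<in> {1..R} \<Longrightarrow> 0 \<le> \<gamma> \<nu> * w ((real k + y \<nu>) * h)"
  using \<gamma>_pos w_nonneg node_in_support by (simp add: less_imp_le)

lemma conv_quadrature_const: "conv_quadrature (\<lambda>_ _. c) j = c"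
proof -
  have "conv_quadrature (\<lambda>_ _. c) j = (h * (\<Sum>k<N. \<Sum>\<nu>=1..R. \<gamma> \<nu> * w ((real k + y \<nu>) * h))) * c"
    by (simp add: conv_quadrature_def sum_distrib_right mult.assoc)
  then show ?thesis using weights_sum by simp
qed

lemma conv_quadrature_mono:
  assumes "\<And>l \<nu>. \<nu> \<in> {1..R} \<Longrightarrow> r l \<nu> \<le> s l \<nu>"
  shows "conv_quadrature r j \<le> conv_quadrature s j"
  unfolding conv_quadrature_def using assms quadrature_weight_nonneg h_pos
  by (intro mult_left_mono sum_mono) auto

lemma conv_quadrature_uminus: "conv_quadrature (\<lambda>l \<nu>. - r l \<nu>) j = - conv_quadrature r j"
  by (simp add: conv_quadrature_def sum_negf)

lemma conv_quadrature_increment_le: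
  assumes "\<And>l \<nu>. \<nu> \<in> {1..R} \<Longrightarrow> r l \<nu> \<le> M"
  shows "conv_quadrature r j - conv_quadrature r (j - 1) \<le> h * w 0 * (\<Sum>\<nu>=1..R. \<gamma> \<nu> * (M - r j \<nu>))"
proof -
  define W where "W \<nu> k = \<gamma> \<nu> * w ((real k + y \<nu>) * h)" for \<nu> k
  define \<rho> where "\<rho> \<nu> k = r (j + int k) \<nu>" for \<nu> k
  have "conv_quadrature r j - conv_quadrature r (j - 1)
      = h * (\<Sum>\<nu>=1..R. \<Sum>k<N. W \<nu> k * (\<rho> \<nu> (Suc k) - \<rho> \<nu> k))"
    unfolding conv_quadrature_def W_def \<rho>_def
    by (subst (1 2) sum.swap)
      (simp add: sum_subtractf right_diff_distrib mult.assoc add.assoc add.commute[of 1])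
  also have "\<dots> \<le> h * (\<Sum>\<nu>=1..R. \<gamma> \<nu> * w 0 * (M - r j \<nu>))"
  proof (intro mult_left_mono sum_mono)
    fix \<nu> assume \<nu>: "\<nu> \<in> {1..R}"
    have "(\<Sum>k<N. W \<nu> k * (\<rho> \<nu> (Suc k) - \<rho> \<nu> k)) \<le> W \<nu> 0 * (M - \<rho> \<nu> 0)"
    proof (rule sum_nonincreasing_weights_forward_diff_le[OF N_pos])
      fix k assume "Suc k < N"
      then show "W \<nu> (Suc k) \<le> W \<nu> k"
        unfolding W_def
        using \<gamma>_pos[OF \<nu>] node_in_support[OF _ \<nu>, of k] node_in_support[OF _ \<nu>, of "Suc k"]
        by (intro mult_left_mono monotone_onD[OF w_antimono]) (auto simp: h_pos)
    qed (use \<nu> quadrature_weight_nonneg assms in \<open>auto simp: W_def \<rho>_def\<close>)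
    also have "\<dots> \<le> \<gamma> \<nu> * w 0 * (M - r j \<nu>)"
      using w_le_w0[OF \<nu>] \<gamma>_pos[OF \<nu>] assms[OF \<nu>]
      by (simp add: W_def \<rho>_def, intro mult_right_mono mult_left_mono) auto
    finally show "(\<Sum>k<N. W \<nu> k * (\<rho> \<nu> (Suc k) - \<rho> \<nu> k)) \<le> \<gamma> \<nu> * w 0 * (M - r j \<nu>)" .
  qed (use h_pos in simp)
  also have "\<dots> = h * w 0 * (\<Sum>\<nu>=1..R. \<gamma> \<nu> * (M - r j \<nu>))"
    by (simp add: sum_distrib_left ac_simps)
  finally show ?thesis .
qed

lemma conv_quadrature_decrement_le:
  assumes "\<And>l \<nu>. \<nu> \<in> {1..R} \<Longrightarrow> m \<le> r l \<nu>"
  shows "conv_quadrature r (j - 1) - conv_quadrature r j \<le> h * w 0 * (\<Sum>\<nu>=1..R. \<gamma> \<nu> * (r j \<nu> - m))"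
  using conv_quadrature_increment_le[of "\<lambda>l \<nu>. - r l \<nu>" "- m" j] assms
  by (simp add: conv_quadrature_uminus)

end

(* r l \<nu> is the reconstructed value rho_l^\<nu>; G, G', V, V' bound g, |g'|, v, |v'|. *)
locale nonlocal_scheme = nonlocal_quadrature +
  fixes g v :: "real \<Rightarrow> real" and rho_max rho_m rho_M G G' V V' tau :: real
    and r :: "int \<Rightarrow> nat \<Rightarrow> real"
  assumes g_mono: "mono_on {0..rho_max} g" and g_lipschitz: "G'-lipschitz_on {0..rho_max} g"
    and g_range: "\<And>x. x \<in> {0..rho_max} \<Longrightarrow> 0 \<le> g x \<and> g x \<le> G"
    and v_antimono: "antimono_on {0..rho_max} v" and v_lipschitz: "V'-lipschitz_on {0..rho_max} v"
    and v_range: "\<And>x. x \<in> {0..rho_max} \<Longrightarrow> 0 \<le> v x \<and> v x \<le> V"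
    and rho_bounds: "0 \<le> rho_m" "rho_m \<le> rho_M" "rho_M \<le> rho_max"
    and r_range: "\<And>l \<nu>. \<nu> \<in> {1..R} \<Longrightarrow> rho_m \<le> r l \<nu> \<and> r l \<nu> \<le> rho_M"
    and \<gamma>_sum: "(\<Sum>\<nu>=1..R. \<gamma> \<nu>) = 1"
    and tau_nonneg: "0 \<le> tau"
    and CFL: "tau * (\<gamma> R * h * w 0 * V' * G + V * G') \<le> \<gamma> R * h"
begin

definition flux :: "int \<Rightarrow> real" where
  "flux j = v (conv_quadrature r j) * g (r j R)"

definition cell_average :: "int \<Rightarrow> real" where
  "cell_average j = (\<Sum>\<nu>=1..R. \<gamma> \<nu> * r j \<nu>)"

definition euler_step :: "int \<Rightarrow> real" where
  "euler_step j = cell_average j - tau / h * (flux j - flux (j - 1))"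

lemma last_node: "R \<in> {1..R}"
  using R_pos by simp

lemma r_in_domain: "\<nu> \<in> {1..R} \<Longrightarrow> r l \<nu> \<in> {0..rho_max}"
  using r_range[of \<nu> l] rho_bounds by auto

lemma conv_quadrature_in_domain: "conv_quadrature r j \<in> {0..rho_max}"
proof -
  have "conv_quadrature (\<lambda>_ _. rho_m) j \<le> conv_quadrature r j"
    "conv_quadrature r j \<le> conv_quadrature (\<lambda>_ _. rho_M) j"
    using r_range by (auto intro!: conv_quadrature_mono)
  then show ?thesis using rho_bounds by (simp add: conv_quadrature_const)
qed

lemma w0_nonneg: "0 \<le> w 0"
  using w_nonneg[of 0] h_pos by simp

lemma last_node_weighted_le_sum:
  assumes "\<And>\<nu>. \<nu> \<in> {1..R} \<Longrightarrow> 0 \<le> d \<nu>"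
  shows "\<gamma> R * d R \<le> (\<Sum>\<nu>=1..R. \<gamma> \<nu> * d \<nu>)"
  by (rule member_le_sum[OF last_node]) (simp_all add: assms \<gamma>_pos less_imp_le)

lemma V_nonneg: "0 \<le> V"
  using v_range[of 0] rho_bounds by auto

lemma scaled_flux_increment_le:
  assumes "0 \<le> d" "\<gamma> R * d \<le> D" "F \<le> V * (G' * d) + G * (V' * (h * w 0 * D))"
  shows "tau / h * F \<le> D"
  using assms \<gamma>_pos[OF last_node] h_pos tau_nonneg lipschitz_on_nonneg[OF g_lipschitz] V_nonneg CFL
  by (intro cfl_increment_le[where L = "V * G'" and c = "w 0 * V' * G"]) (auto simp: algebra_simps)

lemma euler_step_le: "euler_step j \<le> rho_M"
proof -
  define d D where "d = rho_M - r j R" and "D = rho_M - cell_average j"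
  have "0 \<le> d" using r_range[OF last_node] by (simp add: d_def)
  have D_eq: "D = (\<Sum>\<nu>=1..R. \<gamma> \<nu> * (rho_M - r j \<nu>))"
    using \<gamma>_sum by (simp add: D_def cell_average_def right_diff_distrib sum_subtractf
        sum_distrib_right[symmetric])
  have "\<gamma> R * d \<le> D"
    unfolding d_def D_eq using r_range by (intro last_node_weighted_le_sum) auto
  then have "0 \<le> D"
    using \<open>0 \<le> d\<close> \<gamma>_pos[OF last_node] by (meson order.trans zero_le_mult_iff less_imp_le)
  have "conv_quadrature r j - conv_quadrature r (j - 1) \<le> h * w 0 * D"
    unfolding D_eq using r_range by (intro conv_quadrature_increment_le) auto
  have "flux (j - 1) - flux j \<le> V * (G' * d) + G * (V' * (h * w 0 * D))"
    unfolding flux_def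
  proof (rule product_difference_le)
    show "g (r (j - 1) R) - g (r j R) \<le> G' * d"
      using r_in_domain[OF last_node] r_range[OF last_node]
      by (intro mono_on_lipschitz_diff_le[OF g_mono g_lipschitz]) (auto simp: d_def)
    show "v (conv_quadrature r (j - 1)) - v (conv_quadrature r j) \<le> V' * (h * w 0 * D)"
      using \<open>conv_quadrature r j - conv_quadrature r (j - 1) \<le> h * w 0 * D\<close> \<open>0 \<le> D\<close>
        h_pos w0_nonneg conv_quadrature_in_domain
      by (intro antimono_on_lipschitz_diff_le[OF v_antimono v_lipschitz]) auto
  qed (use v_range g_range conv_quadrature_in_domain r_in_domain[OF last_node] \<open>0 \<le> d\<close> \<open>0 \<le> D\<close>
      h_pos w0_nonneg lipschitz_on_nonneg[OF g_lipschitz] lipschitz_on_nonneg[OF v_lipschitz] in auto)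
  then have "tau / h * (flux (j - 1) - flux j) \<le> D"
    using \<open>0 \<le> d\<close> \<open>\<gamma> R * d \<le> D\<close> by (intro scaled_flux_increment_le)
  then show ?thesis by (simp add: euler_step_def D_def algebra_simps)
qed

lemma euler_step_ge: "rho_m \<le> euler_step j"
proof -
  define d D where "d = r j R - rho_m" and "D = cell_average j - rho_m"
  have "0 \<le> d" using r_range[OF last_node] by (simp add: d_def)
  have D_eq: "D = (\<Sum>\<nu>=1..R. \<gamma> \<nu> * (r j \<nu> - rho_m))"
    using \<gamma>_sum by (simp add: D_def cell_average_def right_diff_distrib sum_subtractf
        sum_distrib_right[symmetric])
  have "\<gamma> R * d \<le> D"
    unfolding d_def D_eq using r_range by (intro last_node_weighted_le_sum) auto
  then have "0 \<le> D"
    using \<open>0 \<le> d\<close> \<gamma>_pos[OF last_node] by (meson order.trans zero_le_mult_iff less_imp_le)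
  have "conv_quadrature r (j - 1) - conv_quadrature r j \<le> h * w 0 * D"
    unfolding D_eq using r_range by (intro conv_quadrature_decrement_le) auto
  have "flux j - flux (j - 1) \<le> V * (G' * d) + G * (V' * (h * w 0 * D))"
    unfolding flux_def
  proof (rule product_difference_le)
    show "g (r j R) - g (r (j - 1) R) \<le> G' * d"
      using r_in_domain[OF last_node] r_range[OF last_node]
      by (intro mono_on_lipschitz_diff_le[OF g_mono g_lipschitz]) (auto simp: d_def)
    show "v (conv_quadrature r j) - v (conv_quadrature r (j - 1)) \<le> V' * (h * w 0 * D)"
      using \<open>conv_quadrature r (j - 1) - conv_quadrature r j \<le> h * w 0 * D\<close> \<open>0 \<le> D\<close>
        h_pos w0_nonneg conv_quadrature_in_domain
      by (intro antimono_on_lipschitz_diff_le[OF v_antimono v_lipschitz]) auto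
  qed (use v_range g_range conv_quadrature_in_domain r_in_domain[OF last_node] \<open>0 \<le> d\<close> \<open>0 \<le> D\<close>
      h_pos w0_nonneg lipschitz_on_nonneg[OF g_lipschitz] lipschitz_on_nonneg[OF v_lipschitz] in auto)
  then have "tau / h * (flux j - flux (j - 1)) \<le> D"
    using \<open>0 \<le> d\<close> \<open>\<gamma> R * d \<le> D\<close> by (intro scaled_flux_increment_le)
  then show ?thesis by (simp add: euler_step_def D_def algebra_simps)
qed

end

theorem theorem3p1:
  fixes rho_max eta rho_m rho_M h x0 tau :: real
    and g g' v v' w w' :: "real \<Rightarrow> real"
    and N R :: nat and y \<gamma> :: "nat \<Rightarrow> real"
    and rhobar rhonew :: "int \<Rightarrow> real" and P :: "int \<Rightarrow> real poly"
  assumes rho_max_pos: "rho_max > 0" and eta_pos: "eta > 0"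
    and g_deriv: "\<And>x. x \<in> {0..rho_max} \<Longrightarrow> (g has_real_derivative g' x) (at x within {0..rho_max})"
    and g'_cont: "continuous_on {0..rho_max} g'"
    and g_nonneg: "\<And>x. x \<in> {0..rho_max} \<Longrightarrow> g x \<ge> 0"
    and g'_nonneg: "\<And>x. x \<in> {0..rho_max} \<Longrightarrow> g' x \<ge> 0"
    and v_deriv: "\<And>x. x \<in> {0..rho_max} \<Longrightarrow> (v has_real_derivative v' x) (at x within {0..rho_max})"
    and v'_cont: "continuous_on {0..rho_max} v'"
    and v_nonneg: "\<And>x. x \<in> {0..rho_max} \<Longrightarrow> v x \<ge> 0"
    and v'_nonpos: "\<And>x. x \<in> {0..rho_max} \<Longrightarrow> v' x \<le> 0"
    and w_deriv: "\<And>x. x \<in> {0..eta} \<Longrightarrow> (w has_real_derivative w' x) (at x within {0..eta})"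
    and w'_cont: "continuous_on {0..eta} w'"
    and w_nonneg: "\<And>x. x \<in> {0..eta} \<Longrightarrow> w x \<ge> 0"
    and w'_nonpos: "\<And>x. x \<in> {0..eta} \<Longrightarrow> w' x \<le> 0"
    and w_int: "(w has_integral 1) {0..eta}"
    and rho_bounds: "0 \<le> rho_m" "rho_m \<le> rho_M" "rho_M \<le> rho_max"
    and h_pos: "h > 0" and Nh: "real N * h = eta"
    and y_range: "\<And>\<nu>. \<nu> \<in> {1..R} \<Longrightarrow> y \<nu> \<in> {0..1}"
    and y_R: "y R = 1"
    and \<gamma>_pos: "\<And>\<nu>. \<nu> \<in> {1..R} \<Longrightarrow> \<gamma> \<nu> > 0"
    and \<gamma>_sum: "(\<Sum>\<nu>=1..R. \<gamma> \<nu>) = 1"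
    and w_discrete: "h * (\<Sum>k<N. \<Sum>\<nu>=1..R. \<gamma> \<nu> * w ((real k + y \<nu>) * h)) = 1"
    and rhobar_bounds: "\<And>j. rho_m \<le> rhobar j \<and> rhobar j \<le> rho_M"
    and P_avg: "\<And>l. integral {x0 + real_of_int l * h - h / 2 .. x0 + real_of_int l * h + h / 2}
                        (\<lambda>x. poly (P l) x) / h = rhobar l"
    and P_quad_exact: "\<And>l. integral {x0 + real_of_int l * h - h / 2 .. x0 + real_of_int l * h + h / 2}
                        (\<lambda>x. poly (P l) x) / h = (\<Sum>\<nu>=1..R. \<gamma> \<nu> * recon P x0 h y l \<nu>)"
    and recon_bounds: "\<And>l \<nu>. \<nu> \<in> {1..R} \<Longrightarrow> rho_m \<le> recon P x0 h y l \<nu> \<and> recon P x0 h y l \<nu> \<le> rho_M"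
    and tau_pos: "tau > 0"
    and update: "\<And>j. rhonew j = rhobar j - tau / h *
         (Vface v w P x0 h N R \<gamma> y j * g (poly (P j) (x0 + real_of_int j * h + h / 2))
          - Vface v w P x0 h N R \<gamma> y (j - 1) * g (poly (P (j - 1)) (x0 + real_of_int j * h - h / 2)))"
    and CFL: "tau * (\<gamma> R * h * w 0 * sup_norm_on {0..rho_max} v' * sup_norm_on {0..rho_max} g
                    + sup_norm_on {0..rho_max} v * sup_norm_on {0..rho_max} g') \<le> \<gamma> R * h"
  shows "\<forall>j. rho_m \<le> rhonew j \<and> rhonew j \<le> rho_M"
proof -
  have g_cont: "continuous_on {0..rho_max} g" and v_cont: "continuous_on {0..rho_max} v"
    using DERIV_continuous_on g_deriv v_deriv by blast+
  have sup_norm_bound: "\<And>f x. continuous_on {0..rho_max} f \<Longrightarrow> x \<in> {0..rho_max} \<Longrightarrow>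
      f x \<le> sup_norm_on {0..rho_max} f"
    using abs_le_sup_norm_on[OF compact_Icc] by fastforce
  interpret nonlocal_scheme w h N R \<gamma> y g v rho_max rho_m rho_M
    "sup_norm_on {0..rho_max} g" "sup_norm_on {0..rho_max} g'"
    "sup_norm_on {0..rho_max} v" "sup_norm_on {0..rho_max} v'" tau "recon P x0 h y"
  proof unfold_locales
    show "antimono_on {0..real N * h} w"
      unfolding Nh by (rule antimono_on_Icc_if_deriv_nonpos[OF w_deriv w'_nonpos])
    show "mono_on {0..rho_max} g" by (rule mono_on_Icc_if_deriv_nonneg[OF g_deriv g'_nonneg])
    show "antimono_on {0..rho_max} v" by (rule antimono_on_Icc_if_deriv_nonpos[OF v_deriv v'_nonpos])
    show "(sup_norm_on {0..rho_max} g')-lipschitz_on {0..rho_max} g"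
      using lipschitz_on_Icc_sup_norm_deriv[OF g_deriv g'_cont] rho_max_pos by simp
    show "(sup_norm_on {0..rho_max} v')-lipschitz_on {0..rho_max} v"
      using lipschitz_on_Icc_sup_norm_deriv[OF v_deriv v'_cont] rho_max_pos by simp
  qed (use assms g_cont v_cont sup_norm_bound in \<open>auto simp: Nh\<close>)
  have "rhonew j = euler_step j" for j
    using update[of j] P_avg[of j] P_quad_exact[of j] y_R
    by (simp add: euler_step_def flux_def cell_average_def Vface_eq_conv_quadrature recon_def
        algebra_simps)
  then show ?thesis using euler_step_le euler_step_ge by simp
qed

end
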